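(* Let $k$ be a field, $n\ge1$, and let $Q_H$ be the quiver with vertices $x_1,\ldots,x_{n+1},y_1,\ldots,y_n$ and arrows $r_i:x_i\to y_i$, $l_i:y_i\to x_{i+1}$, $a_i:x_i\to x_{i+1}$ ($i=1,\ldots,n$); put $A_i=r_il_i$. Let $1=c_1<c_2<\cdots<c_{s+1}=n+1$ with $n_k:=c_{k+1}-c_k\ge2$ for all $k=1,\ldots,s$. For $1\le k\le s$ and $1\le i\le n_k$ write $a^k_i=a_{c_k+i-1}$, $A^k_i=A_{c_k+i-1}$ and $W^k=a^k_1\cdots a^k_{n_k}+A^k_1\cdots A^k_{n_k}$. Let $\varphi^k_i:kQ_H\to kQ_H$ be the algebra automorphism with $\varphi^k_i(a^k_i)=a^k_i+A^k_i$ and fixing all other arrows and all stationary paths; let $\bar\gamma^k=\varphi^k_{n_k}\circ\cdots\circ\varphi^k_1$ and $\bar\gamma=\bar\gamma^s\circ\cdots\circ\bar\gamma^1$. Then for each $k$, $$\bar\gamma(W^k)=a^k_1\cdots a^k_{n_k}+\sum_{i=1}^{n_k}a^k_1\cdots a^k_{i-1}A^k_ia^k_{i+1}\cdots a^k_{n_k}+\Gamma_k,$$ where $\Gamma_k$ is a sum of terms each of which is a scalar multiple of a path containing at least two of the factors $A^k_1,\ldots,A^k_{n_k}$.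
   Context: $kQ_H$ is the path algebra of $Q_H$ over $k$; an expression like $a^k_1\cdots A^k_i\cdots a^k_{n_k}$ denotes the path obtained by concatenation. *)

theory Defs
  imports Main "HOL-Library.Sublist"
begin

datatype vert = VX nat | VY nat

datatype arr = ArrR nat | ArrL nat | ArrA nat

fun arr_idx :: "arr \<Rightarrow> nat" where
  "arr_idx (ArrR i) = i" | "arr_idx (ArrL i) = i" | "arr_idx (ArrA i) = i"

fun src :: "arr \<Rightarrow> vert" where
  "src (ArrR i) = VX i" | "src (ArrL i) = VY i" | "src (ArrA i) = VX i"

fun tgt :: "arr \<Rightarrow> vert" where
  "tgt (ArrR i) = VY i" | "tgt (ArrL i) = VX (Suc i)" | "tgt (ArrA i) = VX (Suc i)"

fun is_vert :: "nat \<Rightarrow> vert \<Rightarrow> bool" where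
  "is_vert n (VX i) = (1 \<le> i \<and> i \<le> n + 1)"
| "is_vert n (VY i) = (1 \<le> i \<and> i \<le> n)"

definition is_arr :: "nat \<Rightarrow> arr \<Rightarrow> bool" where
  "is_arr n a = (1 \<le> arr_idx a \<and> arr_idx a \<le> n)"

text \<open>A path is a start vertex together with a list of arrows, composed left to right
  (so the path r_i l_i first traverses r_i, then l_i). The empty list gives the
  stationary path at the vertex.\<close>
type_synonym path = "vert \<times> arr list"

fun chain :: "nat \<Rightarrow> vert \<Rightarrow> arr list \<Rightarrow> bool" where
  "chain n v [] = True"
| "chain n v (a # as) = (is_arr n a \<and> src a = v \<and> chain n (tgt a) as)"

definition valid_path :: "nat \<Rightarrow> path \<Rightarrow> bool" where
  "valid_path n p = (is_vert n (fst p) \<and> chain n (fst p) (snd p))"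

definition pend :: "path \<Rightarrow> vert" where
  "pend p = (if snd p = [] then fst p else tgt (last (snd p)))"

type_synonym 'k palg = "path \<Rightarrow> 'k"

definition supp :: "'k::zero palg \<Rightarrow> path set" where
  "supp f = {p. f p \<noteq> 0}"

definition path_algebra :: "nat \<Rightarrow> ('k::zero palg) set" where
  "path_algebra n = {f. finite (supp f) \<and> (\<forall>p. f p \<noteq> 0 \<longrightarrow> valid_path n p)}"

definition basis :: "path \<Rightarrow> 'k::{zero,one} palg" where
  "basis p = (\<lambda>q. if q = p then 1 else 0)"

definition padd :: "'k::plus palg \<Rightarrow> 'k palg \<Rightarrow> 'k palg" where
  "padd f g = (\<lambda>q. f q + g q)"

definition psum :: "('i \<Rightarrow> 'k::comm_monoid_add palg) \<Rightarrow> 'i set \<Rightarrow> 'k palg" where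
  "psum F I = (\<lambda>q. \<Sum>i\<in>I. F i q)"

definition pmult :: "'k::comm_semiring_1 palg \<Rightarrow> 'k palg \<Rightarrow> 'k palg" where
  "pmult f g = (\<lambda>q. \<Sum>x\<in>{(p1, p2). f p1 \<noteq> 0 \<and> g p2 \<noteq> 0 \<and> pend p1 = fst p2
                              \<and> q = (fst p1, snd p1 @ snd p2)}. f (fst x) * g (snd x))"

fun img_path :: "(arr \<Rightarrow> 'k::comm_semiring_1 palg) \<Rightarrow> vert \<Rightarrow> arr list \<Rightarrow> 'k palg" where
  "img_path \<sigma> v [] = basis (v, [])"
| "img_path \<sigma> v (a # as) = pmult (\<sigma> a) (img_path \<sigma> (tgt a) as)"

definition alg_ext :: "(arr \<Rightarrow> 'k::comm_semiring_1 palg) \<Rightarrow> 'k palg \<Rightarrow> 'k palg" where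
  "alg_ext \<sigma> f = (\<lambda>q. \<Sum>p\<in>supp f. f p * img_path \<sigma> (fst p) (snd p) q)"

definition arrow_elem :: "arr \<Rightarrow> 'k::{zero,one} palg" where
  "arrow_elem a = basis (src a, [a])"

definition A_elem :: "nat \<Rightarrow> 'k::{zero,one} palg" where
  "A_elem j = basis (VX j, [ArrR j, ArrL j])"

definition phi :: "(nat \<Rightarrow> nat) \<Rightarrow> nat \<Rightarrow> nat \<Rightarrow> 'k::comm_semiring_1 palg \<Rightarrow> 'k palg" where
  "phi c k i = alg_ext (\<lambda>a. if a = ArrA (c k + i - 1)
                             then padd (arrow_elem a) (A_elem (c k + i - 1))
                             else arrow_elem a)"

definition nblk :: "(nat \<Rightarrow> nat) \<Rightarrow> nat \<Rightarrow> nat" where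
  "nblk c k = c (Suc k) - c k"

definition gamma_blk :: "(nat \<Rightarrow> nat) \<Rightarrow> nat \<Rightarrow> 'k::comm_semiring_1 palg \<Rightarrow> 'k palg" where
  "gamma_blk c k = fold (\<lambda>i g. phi c k i \<circ> g) [1..<Suc (nblk c k)] id"

definition gamma_bar :: "(nat \<Rightarrow> nat) \<Rightarrow> nat \<Rightarrow> 'k::comm_semiring_1 palg \<Rightarrow> 'k palg" where
  "gamma_bar c s = fold (\<lambda>k g. gamma_blk c k \<circ> g) [1..<Suc s] id"

definition blk_arrows :: "(nat \<Rightarrow> nat) \<Rightarrow> nat \<Rightarrow> (nat \<Rightarrow> bool) \<Rightarrow> arr list" where
  "blk_arrows c k R = concat (map (\<lambda>j. if R (j + 1 - c k) then [ArrR j, ArrL j] else [ArrA j])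
                                  [c k..<c (Suc k)])"

definition a_word :: "(nat \<Rightarrow> nat) \<Rightarrow> nat \<Rightarrow> 'k::{zero,one} palg" where
  "a_word c k = basis (VX (c k), blk_arrows c k (\<lambda>i. False))"

definition A_word :: "(nat \<Rightarrow> nat) \<Rightarrow> nat \<Rightarrow> 'k::{zero,one} palg" where
  "A_word c k = basis (VX (c k), blk_arrows c k (\<lambda>i. True))"

definition mixed_word :: "(nat \<Rightarrow> nat) \<Rightarrow> nat \<Rightarrow> nat \<Rightarrow> 'k::{zero,one} palg" where
  "mixed_word c k i = basis (VX (c k), blk_arrows c k (\<lambda>m. m = i))"

definition W :: "(nat \<Rightarrow> nat) \<Rightarrow> nat \<Rightarrow> 'k::{plus,zero,one} palg" where
  "W c k = padd (a_word c k) (A_word c k)"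

definition num_A_factors :: "(nat \<Rightarrow> nat) \<Rightarrow> nat \<Rightarrow> path \<Rightarrow> nat" where
  "num_A_factors c k p =
     card {i \<in> {1..nblk c k}. sublist [ArrR (c k + i - 1), ArrL (c k + i - 1)] (snd p)}"

end

theory Submission
  imports Defs
begin

text \<open>Write P(R) for the path a^k_1 ... a^k_(n_k) in which a^k_i is replaced by A^k_i for each
  i \<in> R, so that a^k_1 ... a^k_(n_k) = P({}) and A^k_1 ... A^k_(n_k) = P({1..n_k}). The
  automorphism phi^k_i sends P(R) to P(R) + P(R \<union> {i}) when i \<notin> R and fixes
  A^k_1 ... A^k_(n_k); hence, by induction on i, gamma-bar^k(W^k) is the sum of all P(R) with
  R \<subseteq> {1..n_k} plus A^k_1 ... A^k_(n_k). The other blocks only substitute arrows a_j with j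
  outside block k and so fix all these paths. Sorting the sum by the size of R yields the a-word,
  the words with one A-factor, and a remainder of paths with at least two A-factors (among them
  A^k_1 ... A^k_(n_k) itself, since n_k \<ge> 2).\<close>

lemma supp_basis [simp]: "supp (basis p :: 'k::zero_neq_one palg) = {p}"
  by (auto simp: supp_def basis_def)

lemma supp_padd: "supp (padd f g :: 'k::monoid_add palg) \<subseteq> supp f \<union> supp g"
  by (auto simp: supp_def padd_def)

lemma supp_psum: "supp (psum F I) \<subseteq> (\<Union>i\<in>I. supp (F i))"
  unfolding supp_def psum_def using sum.neutral by force

lemma alg_ext_eq_sum_over:
  assumes "finite S" "supp f \<subseteq> S"
  shows "alg_ext \<sigma> f = (\<lambda>q. \<Sum>p\<in>S. f p * img_path \<sigma> (fst p) (snd p) q)"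
  unfolding alg_ext_def
  by (rule ext, rule sum.mono_neutral_left[OF assms]) (auto simp: supp_def)

lemma alg_ext_basis:
  "alg_ext \<sigma> (basis p :: 'k::comm_semiring_1 palg) = img_path \<sigma> (fst p) (snd p)"
  unfolding alg_ext_def supp_basis by (simp add: basis_def)

lemma alg_ext_padd:
  assumes "finite (supp f)" "finite (supp g)"
  shows "alg_ext \<sigma> (padd f g) = padd (alg_ext \<sigma> f) (alg_ext \<sigma> g)"
proof -
  define S where "S = supp f \<union> supp g"
  have S: "finite S" using assms by (simp add: S_def)
  have "alg_ext \<sigma> (padd f g) = (\<lambda>q. \<Sum>p\<in>S. padd f g p * img_path \<sigma> (fst p) (snd p) q)"
    by (rule alg_ext_eq_sum_over[OF S]) (use supp_padd S_def in auto)
  moreover have "alg_ext \<sigma> f = (\<lambda>q. \<Sum>p\<in>S. f p * img_path \<sigma> (fst p) (snd p) q)"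
    by (rule alg_ext_eq_sum_over[OF S]) (auto simp: S_def)
  moreover have "alg_ext \<sigma> g = (\<lambda>q. \<Sum>p\<in>S. g p * img_path \<sigma> (fst p) (snd p) q)"
    by (rule alg_ext_eq_sum_over[OF S]) (auto simp: S_def)
  ultimately show ?thesis by (simp add: padd_def distrib_right sum.distrib)
qed

lemma alg_ext_psum:
  assumes "finite I" "\<forall>i\<in>I. finite (supp (F i))"
  shows "alg_ext \<sigma> (psum F I) = psum (\<lambda>i. alg_ext \<sigma> (F i)) I"
proof -
  define S where "S = (\<Union>i\<in>I. supp (F i))"
  have S: "finite S" using assms by (simp add: S_def)
  have each: "alg_ext \<sigma> (F i) = (\<lambda>q. \<Sum>p\<in>S. F i p * img_path \<sigma> (fst p) (snd p) q)" if "i \<in> I" for i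
    by (rule alg_ext_eq_sum_over[OF S]) (use that in \<open>auto simp: S_def\<close>)
  have "alg_ext \<sigma> (psum F I) = (\<lambda>q. \<Sum>p\<in>S. psum F I p * img_path \<sigma> (fst p) (snd p) q)"
    by (rule alg_ext_eq_sum_over[OF S]) (use supp_psum S_def in auto)
  also have "\<dots> = (\<lambda>q. \<Sum>i\<in>I. \<Sum>p\<in>S. F i p * img_path \<sigma> (fst p) (snd p) q)"
    by (simp add: psum_def sum_distrib_right sum.swap[of _ S I])
  also have "\<dots> = psum (\<lambda>i. alg_ext \<sigma> (F i)) I"
    unfolding psum_def by (auto intro!: ext sum.cong simp: each)
  finally show ?thesis .
qed

lemma pmult_eq_sum_over:
  assumes "finite S1" "supp f \<subseteq> S1" "finite S2" "supp g \<subseteq> S2"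
  shows "pmult f g q = (\<Sum>x\<in>{(p1, p2). p1 \<in> S1 \<and> p2 \<in> S2 \<and> pend p1 = fst p2
                                    \<and> q = (fst p1, snd p1 @ snd p2)}. f (fst x) * g (snd x))"
  unfolding pmult_def
proof (rule sum.mono_neutral_left)
  show "finite {(p1, p2). p1 \<in> S1 \<and> p2 \<in> S2 \<and> pend p1 = fst p2 \<and> q = (fst p1, snd p1 @ snd p2)}"
    by (rule finite_subset[of _ "S1 \<times> S2"]) (use assms in auto)
qed (use assms in \<open>auto simp: supp_def\<close>)

lemma pmult_basis:
  "pmult (basis p1) (basis p2 :: 'k::comm_semiring_1 palg) =
     (if pend p1 = fst p2 then basis (fst p1, snd p1 @ snd p2) else (\<lambda>q. 0))"
proof (rule ext)
  fix q
  have pairs: "{(x, y). x \<in> {p1} \<and> y \<in> {p2} \<and> pend x = fst y \<and> q = (fst x, snd x @ snd y)} =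
      (if pend p1 = fst p2 \<and> q = (fst p1, snd p1 @ snd p2) then {(p1, p2)} else {})"
    by auto
  have "pmult (basis p1) (basis p2 :: 'k palg) q =
      (\<Sum>x\<in>{(x, y). x \<in> {p1} \<and> y \<in> {p2} \<and> pend x = fst y \<and> q = (fst x, snd x @ snd y)}.
         basis p1 (fst x) * basis p2 (snd x))"
    by (rule pmult_eq_sum_over) auto
  then show "pmult (basis p1) (basis p2 :: 'k palg) q =
      (if pend p1 = fst p2 then basis (fst p1, snd p1 @ snd p2) else (\<lambda>q. 0)) q"
    unfolding pairs by (auto simp: basis_def)
qed

lemma pmult_padd_left:
  assumes "finite (supp f)" "finite (supp g)" "finite (supp h)"
  shows "pmult (padd f g) h = padd (pmult f h) (pmult g h)"
proof (rule ext)
  fix q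
  define S where "S = supp f \<union> supp g"
  have S: "finite S" using assms by (simp add: S_def)
  have "supp (padd f g) \<subseteq> S" using supp_padd S_def by blast
  then show "pmult (padd f g) h q = padd (pmult f h) (pmult g h) q"
    unfolding padd_def
    by (simp add: pmult_eq_sum_over[OF S _ assms(3) subset_refl] S_def
        distrib_right sum.distrib padd_def)
qed

lemma pmult_padd_right:
  assumes "finite (supp f)" "finite (supp g)" "finite (supp h)"
  shows "pmult h (padd f g) = padd (pmult h f) (pmult h g)"
proof (rule ext)
  fix q
  define S where "S = supp f \<union> supp g"
  have S: "finite S" using assms by (simp add: S_def)
  have "supp (padd f g) \<subseteq> S" using supp_padd S_def by blast
  then show "pmult h (padd f g) q = padd (pmult h f) (pmult h g) q"
    unfolding padd_def
    by (simp add: pmult_eq_sum_over[OF assms(3) subset_refl S] S_def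
        distrib_left sum.distrib padd_def)
qed

lemma img_path_arrow_elem:
  "chain n v as \<Longrightarrow> \<forall>a\<in>set as. \<sigma> a = arrow_elem a \<Longrightarrow>
     img_path \<sigma> v as = (basis (v, as) :: 'k::comm_semiring_1 palg)"
  by (induction as arbitrary: v) (auto simp: arrow_elem_def pmult_basis pend_def)

lemma img_path_subst_single:
  assumes fixed: "\<forall>a. a \<noteq> ArrA j \<longrightarrow> \<sigma> a = arrow_elem a"
    and subst: "\<sigma> (ArrA j) = padd (arrow_elem (ArrA j)) (A_elem j)"
  shows "chain n v (pre @ ArrA j # post) \<Longrightarrow> ArrA j \<notin> set pre \<Longrightarrow> ArrA j \<notin> set post \<Longrightarrow>
     img_path \<sigma> v (pre @ ArrA j # post) =
       (padd (basis (v, pre @ ArrA j # post)) (basis (v, pre @ ArrR j # ArrL j # post))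
         :: 'k::comm_semiring_1 palg)"
proof (induction pre arbitrary: v)
  case Nil
  have "img_path \<sigma> (VX (Suc j)) post = (basis (VX (Suc j), post) :: 'k palg)"
    by (rule img_path_arrow_elem[of n]) (use Nil fixed in \<open>auto; metis\<close>)+
  with Nil subst show ?case
    by (simp add: arrow_elem_def A_elem_def pmult_padd_left pmult_basis pend_def)
next
  case (Cons b pre)
  then have "\<sigma> b = arrow_elem b" using fixed by auto
  with Cons show ?case
    by (simp add: arrow_elem_def pmult_padd_right pmult_basis pend_def)
qed

lemma fold_comp_apply:
  fixes h :: "'a \<Rightarrow> 'a"
  shows "fold (\<lambda>i g. f i \<circ> g) xs h x = fold (\<lambda>i g. f i \<circ> g) xs id (h x)"
proof (induction xs arbitrary: h x)
  case (Cons y xs)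
  have "fold (\<lambda>i g. f i \<circ> g) (y # xs) h x = fold (\<lambda>i g. f i \<circ> g) xs (f y \<circ> h) x"
    by simp
  also have "\<dots> = fold (\<lambda>i g. f i \<circ> g) xs id (f y (h x))"
    by (subst Cons) simp
  also have "\<dots> = fold (\<lambda>i g. f i \<circ> g) xs (f y) (h x)"
    by (rule Cons[of "f y" "h x", symmetric])
  also have "\<dots> = fold (\<lambda>i g. f i \<circ> g) (y # xs) id (h x)"
    by simp
  finally show ?case .
qed simp

lemma fold_comp_fixes:
  "\<forall>i\<in>set xs. f i x = x \<Longrightarrow> fold (\<lambda>i g. f i \<circ> g) xs id x = x"
  by (induction xs rule: rev_induct) simp_all

lemma sum_Pow_split_card:
  fixes b :: "'a set \<Rightarrow> 'k::comm_monoid_add"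
  assumes "finite A"
  shows "(\<Sum>R\<in>Pow A. b R) = b {} + ((\<Sum>i\<in>A. b {i}) + (\<Sum>R\<in>{R \<in> Pow A. 2 \<le> card R}. b R))"
proof -
  define S1 where "S1 = (\<lambda>i. {i}) ` A"
  define S2 where "S2 = {R \<in> Pow A. 2 \<le> card R}"
  have Pow_eq: "Pow A = insert {} (S1 \<union> S2)"
  proof (intro set_eqI iffI)
    fix R assume R: "R \<in> Pow A"
    show "R \<in> insert {} (S1 \<union> S2)"
    proof (cases "2 \<le> card R")
      case False
      moreover have "finite R" using R assms finite_subset by blast
      ultimately have "R = {} \<or> (\<exists>i. R = {i})"
        using card_1_singleton_iff[of R] by (cases "card R") auto
      then show ?thesis using R by (auto simp: S1_def)
    qed (use R in \<open>simp add: S2_def\<close>)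
  qed (auto simp: S1_def S2_def)
  moreover have "finite S1" "finite S2" "{} \<notin> S1 \<union> S2" "S1 \<inter> S2 = {}"
    using assms by (auto simp: S1_def S2_def)
  moreover have "(\<Sum>R\<in>S1. b R) = (\<Sum>i\<in>A. b {i})"
    unfolding S1_def by (subst sum.reindex) (auto simp: inj_on_def)
  ultimately have "(\<Sum>R\<in>Pow A. b R) = b {} + ((\<Sum>i\<in>A. b {i}) + (\<Sum>R\<in>S2. b R))"
    unfolding Pow_eq by (simp add: sum.union_disjoint)
  then show ?thesis by (simp only: S2_def)
qed

lemma psum_Pow_insert:
  assumes "i \<notin> A" "finite A"
  shows "psum (\<lambda>R. padd (b R) (b (insert i R))) (Pow A) = psum b (Pow (insert i A))"
proof (rule ext)
  fix q
  have inj: "inj_on (insert i) (Pow A)"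
    unfolding inj_on_def using assms by (metis Diff_insert_absorb PowD subsetD)
  have "psum b (Pow (insert i A)) q = (\<Sum>R\<in>Pow A. b R q) + (\<Sum>R\<in>insert i ` Pow A. b R q)"
    unfolding psum_def Pow_insert by (rule sum.union_disjoint) (use assms in auto)
  also have "(\<Sum>R\<in>insert i ` Pow A. b R q) = (\<Sum>R\<in>Pow A. b (insert i R) q)"
    by (simp add: sum.reindex[OF inj])
  finally show "psum (\<lambda>R. padd (b R) (b (insert i R))) (Pow A) q = psum b (Pow (insert i A)) q"
    by (simp add: psum_def padd_def sum.distrib)
qed

lemma stepwise_less_imp_le:
  assumes "\<forall>m\<in>{1..s}. c m < c (Suc m)"
  shows "1 \<le> a \<Longrightarrow> a \<le> b \<Longrightarrow> b \<le> Suc s \<Longrightarrow> c a \<le> (c b :: nat)"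
proof (induction b)
  case (Suc b)
  show ?case
  proof (cases "a = Suc b")
    case False
    then have "c a \<le> c b" using Suc by simp
    also have "c b < c (Suc b)" using assms Suc.prems False by auto
    finally show ?thesis by simp
  qed simp
qed simp

definition blk_factor :: "(nat \<Rightarrow> nat) \<Rightarrow> nat \<Rightarrow> (nat \<Rightarrow> bool) \<Rightarrow> nat \<Rightarrow> arr list" where
  "blk_factor c k P j = (if P (j + 1 - c k) then [ArrR j, ArrL j] else [ArrA j])"

definition blk_path :: "(nat \<Rightarrow> nat) \<Rightarrow> nat \<Rightarrow> nat set \<Rightarrow> path" where
  "blk_path c k R = (VX (c k), blk_arrows c k (\<lambda>m. m \<in> R))"

text \<open>The image of W^k under phi^k_i \<circ> ... \<circ> phi^k_1 is expanded_W c k (Pow {1..i}).\<close>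
definition expanded_W :: "(nat \<Rightarrow> nat) \<Rightarrow> nat \<Rightarrow> nat set set \<Rightarrow> 'k::comm_semiring_1 palg" where
  "expanded_W c k I = padd (psum (\<lambda>R. basis (blk_path c k R)) I) (A_word c k)"

lemma blk_arrows_eq_concat: "blk_arrows c k P = concat (map (blk_factor c k P) [c k..<c (Suc k)])"
  unfolding blk_arrows_def blk_factor_def by simp

lemma ArrA_in_concat_blk_factor_iff:
  "ArrA j \<in> set (concat (map (blk_factor c k P) js)) \<longleftrightarrow> j \<in> set js \<and> \<not> P (j + 1 - c k)"
  by (auto simp: blk_factor_def split: if_splits)

lemma ArrA_in_blk_arrows_iff:
  "ArrA j \<in> set (blk_arrows c k P) \<longleftrightarrow> c k \<le> j \<and> j < c (Suc k) \<and> \<not> P (j + 1 - c k)"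
  by (simp only: blk_arrows_eq_concat ArrA_in_concat_blk_factor_iff) simp

lemma chain_concat_blk_factor:
  "1 \<le> a \<Longrightarrow> a + d \<le> n + 1 \<Longrightarrow> chain n (VX a) (concat (map (blk_factor c k P) [a..<a + d]))"
proof (induction d arbitrary: a)
  case (Suc d)
  have upt: "[a..<a + Suc d] = a # [Suc a..<Suc a + d]" by (simp add: upt_conv_Cons)
  have "chain n (VX (Suc a)) (concat (map (blk_factor c k P) [Suc a..<Suc a + d]))"
    by (rule Suc.IH) (use Suc.prems in auto)
  moreover have "blk_factor c k P a = [ArrR a, ArrL a] \<or> blk_factor c k P a = [ArrA a]"
    by (simp add: blk_factor_def)
  ultimately show ?case
    using Suc.prems unfolding upt by (auto simp: is_arr_def simp del: upt_Suc)
qed simp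

lemma blk_arrows_split:
  assumes "1 \<le> i" "i \<le> nblk c k"
  shows "blk_arrows c k P = concat (map (blk_factor c k P) [c k..<c k + i - 1]) @
     (if P i then [ArrR (c k + i - 1), ArrL (c k + i - 1)] else [ArrA (c k + i - 1)]) @
     concat (map (blk_factor c k P) [c k + i..<c (Suc k)])"
proof -
  have lt: "c k + i - 1 < c (Suc k)" using assms by (simp add: nblk_def)
  have "[c k..<c (Suc k)] = [c k..<c k + i - 1] @ [c k + i - 1..<c (Suc k)]"
    using lt upt_add_eq_append[of "c k" "c k + i - 1" "c (Suc k) - (c k + i - 1)"]
    by (metis le_add1 le_add_diff_inverse less_or_eq_imp_le add_diff_assoc[OF assms(1)])
  also have "[c k + i - 1..<c (Suc k)] = (c k + i - 1) # [c k + i..<c (Suc k)]"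
    using lt assms(1) by (simp add: upt_conv_Cons)
  finally show ?thesis using assms(1) by (simp add: blk_arrows_eq_concat blk_factor_def)
qed

lemma phi_fixes_basis:
  "chain n v as \<Longrightarrow> ArrA (c m + i - 1) \<notin> set as \<Longrightarrow>
     phi c m i (basis (v, as) :: 'k::comm_semiring_1 palg) = basis (v, as)"
  unfolding phi_def alg_ext_basis fst_conv snd_conv by (rule img_path_arrow_elem[of n]) auto

lemma phi_basis_subst:
  assumes "chain n v (pre @ ArrA (c m + i - 1) # post)"
    and "ArrA (c m + i - 1) \<notin> set pre" "ArrA (c m + i - 1) \<notin> set post"
  shows "phi c m i (basis (v, pre @ ArrA (c m + i - 1) # post) :: 'k::comm_semiring_1 palg) =
     padd (basis (v, pre @ ArrA (c m + i - 1) # post))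
          (basis (v, pre @ ArrR (c m + i - 1) # ArrL (c m + i - 1) # post))"
  unfolding phi_def alg_ext_basis fst_conv snd_conv
  by (rule img_path_subst_single[OF _ _ assms]) auto

locale quiver_block =
  fixes n :: nat and c :: "nat \<Rightarrow> nat" and k :: nat
  assumes block_start: "1 \<le> c k"
    and block_ordered: "c k \<le> c (Suc k)"
    and block_end: "c (Suc k) \<le> n + 1"
begin

lemma chain_blk_arrows: "chain n (VX (c k)) (blk_arrows c k P)"
  using chain_concat_blk_factor[of "c k" "c (Suc k) - c k" n c k P]
    block_start block_ordered block_end
  by (simp add: blk_arrows_eq_concat)

lemma valid_blk_path: "valid_path n (blk_path c k R)"
  using chain_blk_arrows block_start block_ordered block_end
  by (simp add: valid_path_def blk_path_def)

lemma A_word_eq_blk_path: "A_word c k = (basis (blk_path c k {1..nblk c k}) :: 'k::zero_neq_one palg)"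
proof -
  have "blk_arrows c k (\<lambda>i. True) = blk_arrows c k (\<lambda>m. m \<in> {1..nblk c k})"
    unfolding blk_arrows_eq_concat
    by (intro arg_cong[where f = concat] map_cong)
       (use block_ordered in \<open>auto simp: blk_factor_def nblk_def\<close>)
  then show ?thesis by (simp add: A_word_def blk_path_def)
qed

lemma supp_expanded_W:
  "supp (expanded_W c k I :: 'k::comm_semiring_1 palg) \<subseteq> blk_path c k ` insert {1..nblk c k} I"
proof -
  have "supp (psum (\<lambda>R. basis (blk_path c k R)) I :: 'k palg) \<subseteq> blk_path c k ` I"
    using supp_psum by fastforce
  moreover have "supp (A_word c k :: 'k palg) = {blk_path c k {1..nblk c k}}"
    by (simp add: A_word_eq_blk_path)
  ultimately show ?thesis unfolding expanded_W_def using supp_padd by blast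
qed

lemma card_le_num_A_factors:
  assumes "R \<subseteq> {1..nblk c k}"
  shows "card R \<le> num_A_factors c k (blk_path c k R)"
  unfolding num_A_factors_def blk_path_def snd_conv
proof (rule card_mono)
  show "R \<subseteq> {i \<in> {1..nblk c k}.
      sublist [ArrR (c k + i - 1), ArrL (c k + i - 1)] (blk_arrows c k (\<lambda>m. m \<in> R))}"
  proof
    fix i assume "i \<in> R"
    moreover have i: "1 \<le> i" "i \<le> nblk c k" using \<open>i \<in> R\<close> assms by auto
    ultimately have "sublist [ArrR (c k + i - 1), ArrL (c k + i - 1)] (blk_arrows c k (\<lambda>m. m \<in> R))"
      by (subst blk_arrows_split[OF i]) (simp only: if_True sublist_appendI)
    with i show "i \<in> {i \<in> {1..nblk c k}.
        sublist [ArrR (c k + i - 1), ArrL (c k + i - 1)] (blk_arrows c k (\<lambda>m. m \<in> R))}"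
      by simp
  qed
qed simp

lemma phi_fixes_A_word: "phi c m i (A_word c k :: 'k::comm_semiring_1 palg) = A_word c k"
  unfolding A_word_def
  by (rule phi_fixes_basis[OF chain_blk_arrows]) (simp add: ArrA_in_blk_arrows_iff)

lemma phi_expanded_W:
  assumes "finite I"
  shows "phi c m i (expanded_W c k I :: 'k::comm_semiring_1 palg) =
    padd (psum (\<lambda>R. phi c m i (basis (blk_path c k R))) I) (A_word c k)"
proof -
  have "finite (supp (psum (\<lambda>R. basis (blk_path c k R)) I :: 'k palg))"
    by (rule finite_subset[OF supp_psum]) (use assms in simp)
  then have "phi c m i (expanded_W c k I :: 'k palg) =
      padd (phi c m i (psum (\<lambda>R. basis (blk_path c k R)) I)) (phi c m i (A_word c k))"
    unfolding expanded_W_def phi_def by (rule alg_ext_padd) (simp add: A_word_def)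
  moreover have "phi c m i (psum (\<lambda>R. basis (blk_path c k R)) I :: 'k palg) =
      psum (\<lambda>R. phi c m i (basis (blk_path c k R))) I"
    unfolding phi_def by (rule alg_ext_psum) (use assms in simp_all)
  ultimately show ?thesis by (simp only: phi_fixes_A_word)
qed

lemma phi_fixes_expanded_W:
  assumes "finite I" "c m + i - 1 \<notin> {c k..<c (Suc k)}"
  shows "phi c m i (expanded_W c k I :: 'k::comm_semiring_1 palg) = expanded_W c k I"
proof -
  have "phi c m i (basis (blk_path c k R) :: 'k palg) = basis (blk_path c k R)" for R
    unfolding blk_path_def
    by (rule phi_fixes_basis[OF chain_blk_arrows]) (use assms(2) in \<open>auto simp: ArrA_in_blk_arrows_iff\<close>)
  then show ?thesis by (simp only: phi_expanded_W[OF assms(1)]) (simp add: expanded_W_def)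
qed

lemma gamma_blk_fixes_expanded_W:
  assumes "finite I" and disjoint: "c (Suc m) \<le> c k \<or> c (Suc k) \<le> c m"
  shows "gamma_blk c m (expanded_W c k I :: 'k::comm_semiring_1 palg) = expanded_W c k I"
  unfolding gamma_blk_def
proof (rule fold_comp_fixes, rule ballI)
  fix i assume "i \<in> set [1..<Suc (nblk c m)]"
  then have "c m + i - 1 \<notin> {c k..<c (Suc k)}" using disjoint by (auto simp: nblk_def)
  then show "phi c m i (expanded_W c k I :: 'k palg) = expanded_W c k I"
    by (rule phi_fixes_expanded_W[OF assms(1)])
qed

lemma phi_blk_path:
  assumes "1 \<le> i" "i \<le> nblk c k" "i \<notin> R"
  shows "phi c k i (basis (blk_path c k R) :: 'k::comm_semiring_1 palg) =
    padd (basis (blk_path c k R)) (basis (blk_path c k (insert i R)))"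
proof -
  let ?j = "c k + i - 1"
  define pre where "pre = concat (map (blk_factor c k (\<lambda>m. m \<in> R)) [c k..<?j])"
  define post where "post = concat (map (blk_factor c k (\<lambda>m. m \<in> R)) [c k + i..<c (Suc k)])"
  have path: "blk_arrows c k (\<lambda>m. m \<in> R) = pre @ ArrA ?j # post"
    using blk_arrows_split[OF assms(1,2), of "\<lambda>m. m \<in> R"] assms(3) by (simp add: pre_def post_def)
  have "concat (map (blk_factor c k (\<lambda>m. m \<in> insert i R)) [c k..<?j]) = pre"
    and "concat (map (blk_factor c k (\<lambda>m. m \<in> insert i R)) [c k + i..<c (Suc k)]) = post"
    unfolding pre_def post_def
    by (intro arg_cong[where f = concat] map_cong; auto simp: blk_factor_def)+
  then have path_insert: "blk_arrows c k (\<lambda>m. m \<in> insert i R) = pre @ ArrR ?j # ArrL ?j # post"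
    using blk_arrows_split[OF assms(1,2), of "\<lambda>m. m \<in> insert i R"] by simp
  have "ArrA ?j \<notin> set pre" "ArrA ?j \<notin> set post"
    unfolding pre_def post_def ArrA_in_concat_blk_factor_iff using assms(1) by auto
  moreover have "chain n (VX (c k)) (pre @ ArrA ?j # post)"
    using chain_blk_arrows path by metis
  ultimately show ?thesis
    unfolding blk_path_def path path_insert by (rule phi_basis_subst[rotated])
qed

lemma phi_expanded_W_Pow:
  assumes "1 \<le> i" "i \<le> nblk c k"
  shows "phi c k i (expanded_W c k (Pow {1..i - 1}) :: 'k::comm_semiring_1 palg) =
    expanded_W c k (Pow {1..i})"
proof -
  have "(psum (\<lambda>R. phi c k i (basis (blk_path c k R))) (Pow {1..i - 1}) :: 'k palg) =
      psum (\<lambda>R. padd (basis (blk_path c k R)) (basis (blk_path c k (insert i R)))) (Pow {1..i - 1})"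
    unfolding psum_def
  proof (intro ext sum.cong refl)
    fix R q assume "R \<in> Pow {1..i - 1}"
    then have "i \<notin> R" using assms(1) by fastforce
    then show "phi c k i (basis (blk_path c k R)) q =
        padd (basis (blk_path c k R)) (basis (blk_path c k (insert i R))) (q :: path)"
      by (simp add: phi_blk_path[OF assms])
  qed
  also have "\<dots> = psum (\<lambda>R. basis (blk_path c k R)) (Pow (insert i {1..i - 1}))"
    by (rule psum_Pow_insert) auto
  also have "insert i {1..i - 1} = {1..i}"
    using assms(1) by auto
  finally show ?thesis
    by (simp only: phi_expanded_W[of "Pow {1..i - 1}"] finite_Pow_iff finite_atLeastAtMost)
       (simp add: expanded_W_def)
qed

lemma gamma_blk_expanded_W:
  "gamma_blk c k (expanded_W c k {{}}) = (expanded_W c k (Pow {1..nblk c k}) :: 'k::comm_semiring_1 palg)"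
proof -
  have "fold (\<lambda>i g. phi c k i \<circ> g) [1..<Suc m] id (expanded_W c k {{}}) =
      (expanded_W c k (Pow {1..m}) :: 'k palg)" if "m \<le> nblk c k" for m
    using that
  proof (induction m)
    case (Suc m)
    then show ?case using phi_expanded_W_Pow[of "Suc m"] by simp
  qed simp
  then show ?thesis by (simp add: gamma_blk_def)
qed

lemma expanded_W_decomposition:
  assumes "2 \<le> nblk c k"
  shows "\<exists>\<Gamma> :: 'k::comm_semiring_1 palg.
           finite (supp \<Gamma>)
         \<and> (\<forall>p. \<Gamma> p \<noteq> 0 \<longrightarrow> valid_path n p \<and> num_A_factors c k p \<ge> 2)
         \<and> expanded_W c k (Pow {1..nblk c k}) =
             padd (padd (a_word c k) (psum (mixed_word c k) {1..nblk c k})) \<Gamma>"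
proof (intro exI conjI allI impI)
  let ?I = "{R \<in> Pow {1..nblk c k}. 2 \<le> card R}"
  have supp: "supp (expanded_W c k ?I :: 'k palg) \<subseteq> blk_path c k ` ?I"
    using supp_expanded_W[of ?I] assms by auto
  then show "finite (supp (expanded_W c k ?I :: 'k palg))"
    by (rule finite_surj[rotated]) simp
  fix p assume "(expanded_W c k ?I :: 'k palg) p \<noteq> 0"
  then obtain R where "R \<subseteq> {1..nblk c k}" "2 \<le> card R" "p = blk_path c k R"
    using supp by (auto simp: supp_def)
  then show "valid_path n p" "num_A_factors c k p \<ge> 2"
    using valid_blk_path card_le_num_A_factors by (auto intro: order_trans)
next
  have a: "a_word c k = (basis (blk_path c k {}) :: 'k palg)"
    and m: "mixed_word c k i = (basis (blk_path c k {i}) :: 'k palg)" for i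
    by (simp_all add: a_word_def mixed_word_def blk_path_def)
  show "(expanded_W c k (Pow {1..nblk c k}) :: 'k palg) = padd (padd (a_word c k)
      (psum (mixed_word c k) {1..nblk c k})) (expanded_W c k {R \<in> Pow {1..nblk c k}. 2 \<le> card R})"
    unfolding expanded_W_def padd_def psum_def a m
    by (simp add: sum_Pow_split_card add.assoc)
qed

end

lemma quiver_block_of_partition:
  assumes "\<forall>m\<in>{1..s}. c m < c (Suc m)" "1 \<le> c 1" "1 \<le> k" "k \<le> s" "c (Suc s) \<le> n + 1"
  shows "quiver_block n c k"
proof
  have le: "c a \<le> c b" if "1 \<le> a" "a \<le> b" "b \<le> Suc s" for a b
    using stepwise_less_imp_le[OF assms(1) that] .
  show "1 \<le> c k" "c k \<le> c (Suc k)" "c (Suc k) \<le> n + 1"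
    using le[of 1 k] le[of k "Suc k"] le[of "Suc k" "Suc s"] assms by auto
qed

lemma gamma_bar_W:
  assumes mono: "\<forall>m\<in>{1..s}. c m < c (Suc m)" and "1 \<le> c 1" "1 \<le> k" "k \<le> s"
  shows "gamma_bar c s (W c k) = (expanded_W c k (Pow {1..nblk c k}) :: 'k::comm_semiring_1 palg)"
proof -
  have le: "c a \<le> c b" if "1 \<le> a" "a \<le> b" "b \<le> Suc s" for a b
    using stepwise_less_imp_le[OF mono that] .
  interpret quiver_block "c (Suc s)" c k
    by (rule quiver_block_of_partition[of s]) (use assms in auto)
  define G where "G = (\<lambda>m g. gamma_blk c m \<circ> g :: 'k palg \<Rightarrow> 'k palg)"
  have "[1..<Suc s] = [1..<k] @ [k..<Suc s]"
    using upt_add_eq_append[of 1 k "Suc s - k"] assms(3,4) by simp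
  also have "[k..<Suc s] = k # [Suc k..<Suc s]"
    using assms(4) by (simp add: upt_conv_Cons)
  finally have gamma_bar_eq:
    "gamma_bar c s x = fold G [Suc k..<Suc s] (gamma_blk c k \<circ> fold G [1..<k] id) x" for x
    unfolding gamma_bar_def G_def by simp
  have fold_G: "fold G xs h x = fold G xs id (h x)" for xs h x
    unfolding G_def by (rule fold_comp_apply)
  have split:
    "gamma_bar c s x = fold G [Suc k..<Suc s] id (gamma_blk c k (fold G [1..<k] id x))" for x
    unfolding gamma_bar_eq fold_G[of _ "gamma_blk c k \<circ> fold G [1..<k] id"] comp_apply ..
  have before: "fold G [1..<k] id (expanded_W c k {{}}) = expanded_W c k {{}}"
    unfolding G_def
    by (rule fold_comp_fixes) (use assms(4) in \<open>auto intro!: gamma_blk_fixes_expanded_W le\<close>)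
  have after: "fold G [Suc k..<Suc s] id (expanded_W c k (Pow {1..nblk c k})) =
      expanded_W c k (Pow {1..nblk c k})"
    unfolding G_def
    by (rule fold_comp_fixes) (use assms(4) in \<open>auto intro!: gamma_blk_fixes_expanded_W le\<close>)
  have "W c k = (expanded_W c k {{}} :: 'k palg)"
    by (rule ext) (simp add: W_def expanded_W_def psum_def a_word_def blk_path_def)
  then show ?thesis
    by (simp only: split before gamma_blk_expanded_W after)
qed

theorem mainTheorem6:
  fixes n s :: nat and c :: "nat \<Rightarrow> nat" and k :: nat
  assumes "n \<ge> 1"
    and "c 1 = 1"
    and "c (Suc s) = n + 1"
    and "\<forall>m\<in>{1..s}. c m < c (Suc m)"
    and "\<forall>m\<in>{1..s}. nblk c m \<ge> 2"
    and "1 \<le> k" and "k \<le> s"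
  shows "\<exists>\<Gamma> :: 'f::field palg.
           finite (supp \<Gamma>)
         \<and> (\<forall>p. \<Gamma> p \<noteq> 0 \<longrightarrow> valid_path n p \<and> num_A_factors c k p \<ge> 2)
         \<and> gamma_bar c s (W c k) =
             padd (padd (a_word c k) (psum (mixed_word c k) {1..nblk c k})) \<Gamma>"
proof -
  interpret quiver_block n c k
    by (rule quiver_block_of_partition[of s]) (use assms in auto)
  have "gamma_bar c s (W c k) = (expanded_W c k (Pow {1..nblk c k}) :: 'f palg)"
    by (rule gamma_bar_W) (use assms in auto)
  with expanded_W_decomposition show ?thesis
    using assms(5-7) by auto
qed

end
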